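(* Let $V$ be a finite vertex set with $|V| = n$ and let $\{k_u\}_{u\in V}$ be a degree sequence with $k_u \ge 1$ for all $u$. Then the graph of loopy-multigraphs $\mathcal{G}_{lm}(\{k_u\})$ is connected: for any two loopy-multigraphs $G, G'$ on $V$ with degree sequence $\{k_u\}$, there is a finite sequence of double edge swaps transforming $G$ into $G'$ such that every intermediate graph is also a loopy-multigraph on $V$ with degree sequence $\{k_u\}$.
   Context: All graphs are on a fixed labeled vertex set $V$; a graph is a multiset $E$ of unordered pairs $(u,v)$ with $u,v\in V$, where a pair $(u,u)$ is a self-loop and an edge occurring more than once is a multiedge (or multiple self-loop, if it is a loop). The degree $k_u$ of $u$ is the number of edge-endpoints at $u$, so each self-loop at $u$ contributes $2$ to $k_u$. A loopy-multigraph is such a graph in which each self-loop occurs at most once (no multiple self-loops) but non-loop edges may have any multiplicity. A double edge swap $(u,v),(x,y)\leadsto(u,x),(v,y)$ on a graph removes one copy of each of two edge occurrences $(u,v)$ and $(x,y)$ (loops allowed, i.e. possibly $u=v$ or $x=y$) and adds the edges $(u,x)$ and $(v,y)$; since edges are unordered, either pairing of endpoints may be used. It preserves the degree sequence. The graph of loopy-multigraphs $\mathcal{G}_{lm}(\{k_u\})$ has as vertices all loopy-multigraphs on $V$ with degree sequence $\{k_u\}$, with two distinct such graphs adjacent if one is obtained from the other by a single double edge swap. *)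

theory Defs
  imports Main "HOL-Library.Multiset"
begin

text \<open>An edge is an unordered pair, represented as a multiset of size 2:
  the edge (u,v) is the multiset containing u and v; a self-loop (u,u) is the multiset
  containing u twice.\<close>

definition edge :: "'a \<Rightarrow> 'a \<Rightarrow> 'a multiset" where
  "edge u v = {#u, v#}"

text \<open>Degree: number of edge-endpoints at u (a loop contributes 2).\<close>
definition deg :: "'a multiset multiset \<Rightarrow> 'a \<Rightarrow> nat" where
  "deg E u = sum_mset (image_mset (\<lambda>e. count e u) E)"

definition graph_on :: "'a set \<Rightarrow> 'a multiset multiset \<Rightarrow> bool" where
  "graph_on V E \<longleftrightarrow> (\<forall>e \<in># E. size e = 2 \<and> set_mset e \<subseteq> V)"

definition loopy_multigraph :: "'a set \<Rightarrow> ('a \<Rightarrow> nat) \<Rightarrow> 'a multiset multiset \<Rightarrow> bool" where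
  "loopy_multigraph V k E \<longleftrightarrow> graph_on V E \<and> (\<forall>u. count E (edge u u) \<le> 1)
     \<and> (\<forall>u \<in> V. deg E u = k u)"

definition double_edge_swap :: "'a multiset multiset \<Rightarrow> 'a multiset multiset \<Rightarrow> bool" where
  "double_edge_swap E E' \<longleftrightarrow> (\<exists>u v x y.
      {#edge u v, edge x y#} \<subseteq># E \<and>
      E' = E - {#edge u v, edge x y#} + {#edge u x, edge v y#})"

definition lm_adj :: "'a set \<Rightarrow> ('a \<Rightarrow> nat) \<Rightarrow> 'a multiset multiset \<Rightarrow> 'a multiset multiset \<Rightarrow> bool" where
  "lm_adj V k G H \<longleftrightarrow> loopy_multigraph V k G \<and> loopy_multigraph V k H \<and> G \<noteq> H
     \<and> (double_edge_swap G H \<or> double_edge_swap H G)"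

end

theory Submission
  imports Defs
begin

text \<open>Induction on the number of edges of G missing from G'. Since G and G' have the same
  degrees, the differences G - G' and G' - G have the same degrees, so an edge of one difference
  at a vertex can always be continued by an edge of the other. Given a non-loop edge uv of
  G - G', pick uw in G' - G and then wz in G - G' other than uv; the swap
  (u,v),(w,z) \<leadsto> (u,w),(v,z) in G gains the edge uw of G'. It only fails to produce a
  loopy-multigraph if z = v and G already has the loop vv; then v has degree at least 2 in
  G - G', so some vy lies in G' - G, and the swap (u,w),(v,y) \<leadsto> (u,v),(w,y) in G' gains the
  edge uv of G instead. If G - G' has only loops, G' - G contains a non-loop edge.\<close>

lemma edge_eq_iff: "edge a b = edge c d \<longleftrightarrow> (a = c \<and> b = d) \<or> (a = d \<and> b = c)"
  unfolding edge_def by (auto simp: add_eq_conv_ex)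

lemma edge_commute: "edge a b = edge b a"
  unfolding edge_def by auto

lemma count_edge: "count (edge a b) x = (if a = x then 1 else 0) + (if b = x then 1 else 0)"
  unfolding edge_def by auto

lemma size_edge [simp]: "size (edge a b) = 2"
  unfolding edge_def by simp

lemma set_mset_edge [simp]: "set_mset (edge a b) = {a, b}"
  unfolding edge_def by auto

lemma size_2_eq_edge:
  assumes "size e = 2" and "x \<in># e"
  obtains y where "e = edge x y"
proof -
  have "size (e - {#x#}) = 1"
    using assms by (simp add: size_Diff_singleton)
  then obtain y where "e - {#x#} = {#y#}"
    by (metis One_nat_def size_1_singleton_mset)
  then have "e = edge x y"
    using \<open>x \<in># e\<close> unfolding edge_def by (metis insert_DiffM add_mset_commute)
  then show thesis ..
qed

lemma deg_union [simp]: "deg (A + B) x = deg A x + deg B x"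
  unfolding deg_def by simp

lemma deg_add_mset [simp]: "deg (add_mset e M) x = count e x + deg M x"
  unfolding deg_def by simp

lemma deg_empty [simp]: "deg {#} x = 0"
  unfolding deg_def by simp

lemma deg_mono: "A \<subseteq># M \<Longrightarrow> deg A x \<le> deg M x"
  by (metis deg_union le_add1 subset_mset.add_diff_inverse)

lemma deg_diff: "A \<subseteq># M \<Longrightarrow> deg (M - A) x = deg M x - deg A x"
  by (metis deg_union diff_add_inverse subset_mset.add_diff_inverse)

lemma count_le_deg: "e \<in># M \<Longrightarrow> count e x \<le> deg M x"
  by (metis deg_add_mset insert_DiffM le_add1)

lemma deg_diff_commute:
  assumes "deg G t = deg G' t"
  shows "deg (G - G') t = deg (G' - G) t"
proof -
  have "G = (G \<inter># G') + (G - G')" "G' = (G \<inter># G') + (G' - G)"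
    by (simp_all add: multiset_eq_iff min_def)
  then have "deg G t = deg (G \<inter># G') t + deg (G - G') t"
    and "deg G' t = deg (G \<inter># G') t + deg (G' - G) t"
    by (metis deg_union)+
  then show ?thesis
    using assms by simp
qed

lemma size_diff_commute:
  fixes M N :: "'b multiset"
  assumes "size M = size N"
  shows "size (M - N) = size (N - M)"
  using assms by (simp add: size_Diff_subset_Int subset_mset.inf_commute)

lemma graph_on_diff: "graph_on V M \<Longrightarrow> graph_on V (M - N)"
  unfolding graph_on_def by (auto dest: in_diffD)

lemma graph_on_edge_at:
  assumes "graph_on V M" and "0 < deg M t"
  obtains y where "edge t y \<in># M"
proof -
  have "\<exists>e. e \<in># M \<and> t \<in># e"
    using assms(2) by (induction M) (auto split: if_splits)
  then obtain e where "e \<in># M" "t \<in># e"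
    by blast
  with assms(1) show thesis
    unfolding graph_on_def by (metis size_2_eq_edge that)
qed

lemma sum_deg_eq_twice_size:
  assumes "finite V" and "graph_on V E"
  shows "(\<Sum>u\<in>V. deg E u) = 2 * size E"
  using assms(2)
proof (induction E)
  case empty
  then show ?case by simp
next
  case (add e E)
  have e: "size e = 2" "set_mset e \<subseteq> V" and E: "graph_on V E"
    using add.prems unfolding graph_on_def by auto
  have "(\<Sum>u\<in>V. count e u) = (\<Sum>u\<in>set_mset e. count e u)"
    using e assms(1) by (intro sum.mono_neutral_right) (auto simp: not_in_iff)
  also have "\<dots> = 2"
    using e by (metis size_multiset_overloaded_eq)
  finally show ?case
    using add.IH[OF E] by (simp add: sum.distrib)
qed

lemma loopy_multigraph_size_eq:
  assumes "finite V" "loopy_multigraph V k G" "loopy_multigraph V k G'"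
  shows "size G = size G'"
proof -
  have "2 * size G = (\<Sum>u\<in>V. deg G u)"
    using sum_deg_eq_twice_size assms unfolding loopy_multigraph_def by metis
  also have "\<dots> = (\<Sum>u\<in>V. deg G' u)"
    using assms unfolding loopy_multigraph_def by simp
  also have "\<dots> = 2 * size G'"
    using sum_deg_eq_twice_size assms unfolding loopy_multigraph_def by metis
  finally show ?thesis by simp
qed

lemma loopy_multigraph_deg_diff_commute:
  assumes "loopy_multigraph V k G" "loopy_multigraph V k G'" "t \<in> V"
  shows "deg (G - G') t = deg (G' - G) t"
  using assms by (intro deg_diff_commute) (simp add: loopy_multigraph_def)

lemma loopy_multigraph_loop_diff:
  assumes "loopy_multigraph V k G'" and "edge t t \<in># G' - G"
  shows "count G (edge t t) = 0"
proof -
  have "count G (edge t t) < count G' (edge t t)"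
    using assms(2) by (simp add: in_diff_count)
  moreover have "count G' (edge t t) \<le> 1"
    using assms(1) unfolding loopy_multigraph_def by blast
  ultimately show ?thesis by linarith
qed

lemma loopy_multigraph_swap:
  assumes lm: "loopy_multigraph V k G"
    and sub: "{#edge u v, edge x y#} \<subseteq># G"
    and loops: "\<And>t. count G (edge t t) + count {#edge u x, edge v y#} (edge t t) \<le> 1"
  shows "loopy_multigraph V k (G - {#edge u v, edge x y#} + {#edge u x, edge v y#})"
proof -
  let ?A = "{#edge u v, edge x y#}" and ?B = "{#edge u x, edge v y#}"
  have go: "graph_on V G"
    using lm unfolding loopy_multigraph_def by simp
  have "edge u v \<in># G" "edge x y \<in># G"
    using sub by (auto dest: mset_subset_eqD)
  then have "{u, v, x, y} \<subseteq> V"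
    using go unfolding graph_on_def by auto
  then have "graph_on V (G - ?A + ?B)"
    using go unfolding graph_on_def by (auto dest: in_diffD)
  moreover have "count (G - ?A + ?B) (edge t t) \<le> 1" for t
  proof -
    have "count (G - ?A + ?B) (edge t t) \<le> count G (edge t t) + count ?B (edge t t)"
      by simp
    then show ?thesis using loops[of t] by linarith
  qed
  moreover have "deg (G - ?A + ?B) t = deg G t" for t
    using deg_diff[OF sub, of t] deg_mono[OF sub, of t] by (simp add: count_edge)
  ultimately show ?thesis
    using lm unfolding loopy_multigraph_def by simp
qed

definition swap_towards :: "'a set \<Rightarrow> ('a \<Rightarrow> nat) \<Rightarrow> 'a multiset multiset \<Rightarrow> 'a multiset multiset \<Rightarrow> bool" where
  "swap_towards V k G G' \<longleftrightarrow> (\<exists>H. lm_adj V k G H \<and> size (H - G') < size (G - G'))"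

lemma size_diff_replace_less:
  assumes A: "A \<subseteq># G - G'" and c: "c \<in># B" "count G c < count G' c"
    and AB: "size A = size B"
  shows "size (G - A + B - G') < size (G - G')"
proof -
  have "G - A + B - G' \<subseteq># (G - G' - A) + (B - {#c#})"
  proof (rule mset_subset_eqI)
    fix e
    have "count A e \<le> count G e - count G' e"
      using A by (metis count_diff mset_subset_eq_count)
    moreover have "count B c \<ge> 1"
      using c by (simp add: Suc_le_eq)
    ultimately show "count (G - A + B - G') e \<le> count (G - G' - A + (B - {#c#})) e"
      using c by (cases "e = c") auto
  qed
  then have "size (G - A + B - G') \<le> size (G - G' - A) + size (B - {#c#})"
    using size_mset_mono by fastforce
  moreover have "size (G - G' - A) = size (G - G') - size A"
    by (rule size_Diff_submset[OF A])
  moreover have "size A \<le> size (G - G')"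
    using A by (rule size_mset_mono)
  moreover have "size (B - {#c#}) < size B"
    using c by (simp add: size_Diff1_less)
  ultimately show ?thesis
    using AB by linarith
qed

lemma swap_towardsI:
  assumes lG: "loopy_multigraph V k G"
    and sub: "{#edge u v, edge x y#} \<subseteq># G - G'"
    and loops: "\<And>t. count G (edge t t) + count {#edge u x, edge v y#} (edge t t) \<le> 1"
    and gain: "count G (edge u x) < count G' (edge u x)"
  shows "swap_towards V k G G'"
proof -
  define H where "H = G - {#edge u v, edge x y#} + {#edge u x, edge v y#}"
  have subG: "{#edge u v, edge x y#} \<subseteq># G"
    using sub by (meson diff_subset_eq_self subset_mset.order_trans)
  have lH: "loopy_multigraph V k H"
    unfolding H_def using lG subG loops by (rule loopy_multigraph_swap)
  have closer: "size (H - G') < size (G - G')"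
    unfolding H_def by (rule size_diff_replace_less[OF sub _ gain]) simp_all
  then have "G \<noteq> H" by auto
  moreover have "double_edge_swap G H"
    unfolding double_edge_swap_def H_def using subG by blast
  ultimately show ?thesis
    unfolding swap_towards_def lm_adj_def using lG lH closer by blast
qed

lemma swap_towards_if_no_double_loop:
  assumes lG: "loopy_multigraph V k G" and lG': "loopy_multigraph V k G'"
    and sub: "{#edge u v, edge w z#} \<subseteq># G - G'" and uw: "edge u w \<in># G' - G"
    and "u \<noteq> v" and no_double_loop: "z = v \<Longrightarrow> count G (edge v v) = 0"
  shows "swap_towards V k G G'"
  using lG sub
proof (rule swap_towardsI)
  show "count G (edge u w) < count G' (edge u w)"
    using uw by (simp add: in_diff_count)
  fix t
  have "count G (edge t t) \<le> 1"
    using lG unfolding loopy_multigraph_def by blast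
  moreover have "count G (edge t t) = 0" if "edge u w = edge t t"
    using that uw loopy_multigraph_loop_diff[OF lG'] by (metis edge_eq_iff)
  moreover have "count G (edge t t) = 0" if "edge v z = edge t t"
    using that no_double_loop by (auto simp: edge_eq_iff)
  moreover have "\<not> (edge u w = edge t t \<and> edge v z = edge t t)"
    using \<open>u \<noteq> v\<close> by (auto simp: edge_eq_iff)
  ultimately show "count G (edge t t) + count {#edge u w, edge v z#} (edge t t) \<le> 1"
    by auto
qed

lemma swap_towards_if_double_loop:
  assumes lG: "loopy_multigraph V k G" and lG': "loopy_multigraph V k G'"
    and sub: "{#edge u v, edge w v#} \<subseteq># G - G'" and uw: "edge u w \<in># G' - G"
    and "u \<noteq> v" and vv: "edge v v \<in># G"
  shows "swap_towards V k G' G"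
proof -
  have uv: "edge u v \<in># G - G'" and wv: "edge w v \<in># G - G'"
    using sub by (auto dest: mset_subset_eqD)
  have "w \<noteq> v"
    using uv uw by (auto simp: in_diff_count)
  have vV: "v \<in> V"
    using uv lG graph_on_diff unfolding loopy_multigraph_def graph_on_def by fastforce
  have "2 \<le> deg (G - G') v"
    using deg_mono[OF sub, of v] \<open>u \<noteq> v\<close> \<open>w \<noteq> v\<close> by (simp add: count_edge)
  then have "0 < deg (G' - G) v"
    using loopy_multigraph_deg_diff_commute[OF lG lG' vV] by simp
  then obtain y where vy: "edge v y \<in># G' - G"
    using lG' graph_on_diff graph_on_edge_at unfolding loopy_multigraph_def by metis
  have "y \<noteq> v"
  proof
    assume "y = v"
    then have "count G (edge v v) = 0"
      using vy loopy_multigraph_loop_diff[OF lG'] by simp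
    then show False
      using vv by (metis not_in_iff)
  qed
  have "y \<noteq> u" and "y \<noteq> w"
    using vy uv wv edge_commute by (metis in_diff_count less_asym)+
  have "edge v y \<noteq> edge u w"
    using \<open>u \<noteq> v\<close> \<open>w \<noteq> v\<close> by (auto simp: edge_eq_iff)
  then have sub': "{#edge u w, edge v y#} \<subseteq># G' - G"
    using uw vy by (simp add: insert_subset_eq_iff in_diff_count)
  show ?thesis
    using lG' sub'
  proof (rule swap_towardsI)
    show "count G' (edge u v) < count G (edge u v)"
      using uv by (simp add: in_diff_count)
    show "count G' (edge t t) + count {#edge u v, edge w y#} (edge t t) \<le> 1" for t
      using lG' \<open>u \<noteq> v\<close> \<open>y \<noteq> w\<close> unfolding loopy_multigraph_def by (auto simp: edge_eq_iff)
  qed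
qed

lemma swap_towards_from_nonloop:
  assumes lG: "loopy_multigraph V k G" and lG': "loopy_multigraph V k G'"
    and uv: "edge u v \<in># G - G'" and "u \<noteq> v"
  shows "swap_towards V k G G' \<or> swap_towards V k G' G"
proof -
  have goD: "graph_on V (G - G')" and goD': "graph_on V (G' - G)"
    using lG lG' graph_on_diff unfolding loopy_multigraph_def by blast+
  have degD: "deg (G - G') t = deg (G' - G) t" if "t \<in> V" for t
    using loopy_multigraph_deg_diff_commute[OF lG lG' that] .
  have uV: "u \<in> V"
    using uv goD unfolding graph_on_def by auto
  have "0 < deg (G' - G) u"
    using count_le_deg[OF uv, of u] degD[OF uV] by (simp add: count_edge)
  then obtain w where uw: "edge u w \<in># G' - G"
    using goD' graph_on_edge_at by metis
  have "w \<noteq> v"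
    using uv uw by (auto simp: in_diff_count)
  have wV: "w \<in> V"
    using uw goD' unfolding graph_on_def by auto
  have "count (edge u v) w < count (edge u w) w"
    using \<open>w \<noteq> v\<close> by (simp add: count_edge)
  also have "\<dots> \<le> deg (G - G') w"
    using count_le_deg[OF uw, of w] degD[OF wV] by simp
  finally have "0 < deg (G - G' - {#edge u v#}) w"
    using deg_diff[of "{#edge u v#}" "G - G'" w] uv by simp
  then obtain z where "edge w z \<in># G - G' - {#edge u v#}"
    using goD graph_on_diff graph_on_edge_at by metis
  then have sub: "{#edge u v, edge w z#} \<subseteq># G - G'"
    using uv by (simp add: insert_subset_eq_iff)
  show ?thesis
  proof (cases "z = v \<and> edge v v \<in># G")
    case True
    then show ?thesis
      using swap_towards_if_double_loop[OF lG lG' _ uw \<open>u \<noteq> v\<close>] sub by blast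
  next
    case False
    then show ?thesis
      using swap_towards_if_no_double_loop[OF lG lG' sub uw \<open>u \<noteq> v\<close>] by (auto simp: not_in_iff)
  qed
qed

lemma nonloop_in_diff:
  assumes lG: "loopy_multigraph V k G" and lG': "loopy_multigraph V k G'"
    and e: "e \<in># G - G'"
  obtains u v where "u \<noteq> v" "edge u v \<in># G - G' \<or> edge u v \<in># G' - G"
proof -
  have goD: "graph_on V (G - G')" and goD': "graph_on V (G' - G)"
    using lG lG' graph_on_diff unfolding loopy_multigraph_def by blast+
  have "size e = 2"
    using e goD unfolding graph_on_def by blast
  then obtain a where "a \<in># e"
    by (metis size_empty zero_neq_numeral multiset_nonemptyE)
  then obtain b where eab: "e = edge a b"
    using \<open>size e = 2\<close> size_2_eq_edge by metis
  show thesis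
  proof (cases "a = b")
    case False
    then show thesis
      using that[of a b] e eab by auto
  next
    case True
    with e eab have aa: "edge a a \<in># G - G'" by simp
    have aV: "a \<in> V"
      using aa goD unfolding graph_on_def by auto
    have "2 \<le> deg (G - G') a"
      using count_le_deg[OF aa, of a] by (simp add: count_edge)
    then have "0 < deg (G' - G) a"
      using loopy_multigraph_deg_diff_commute[OF lG lG' aV] by simp
    then obtain c where ac: "edge a c \<in># G' - G"
      using goD' graph_on_edge_at by metis
    have "c \<noteq> a"
      using aa ac by (auto simp: in_diff_count)
    then show thesis
      using that[of a c] ac by auto
  qed
qed

lemma swap_towards_exists:
  assumes "finite V" and lG: "loopy_multigraph V k G" and lG': "loopy_multigraph V k G'"
    and "G \<noteq> G'"
  shows "swap_towards V k G G' \<or> swap_towards V k G' G"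
proof -
  have "G - G' \<noteq> {#}"
    using \<open>G \<noteq> G'\<close> loopy_multigraph_size_eq[OF assms(1-3)]
    by (metis Diff_eq_empty_iff_mset mset_subset_size subset_mset.le_imp_less_or_eq less_irrefl)
  then obtain e where "e \<in># G - G'"
    by blast
  then obtain u v where "u \<noteq> v" "edge u v \<in># G - G' \<or> edge u v \<in># G' - G"
    using nonloop_in_diff[OF lG lG'] by blast
  then show ?thesis
    using swap_towards_from_nonloop[OF lG lG'] swap_towards_from_nonloop[OF lG' lG] by blast
qed

lemma lm_adj_sym: "lm_adj V k G H \<Longrightarrow> lm_adj V k H G"
  unfolding lm_adj_def by auto

theorem theorem1:
  fixes V :: "'a set" and k :: "'a \<Rightarrow> nat" and G G' :: "'a multiset multiset"
  assumes "finite V"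
    and "\<forall>u \<in> V. k u \<ge> 1"
    and "loopy_multigraph V k G"
    and "loopy_multigraph V k G'"
  shows "(lm_adj V k)\<^sup>*\<^sup>* G G'"
  using assms(3,4)
proof (induction "size (G - G')" arbitrary: G G' rule: less_induct)
  case less
  note lG = less.prems(1) and lG' = less.prems(2)
  consider "G = G'" | "swap_towards V k G G'" | "swap_towards V k G' G"
    using swap_towards_exists[OF assms(1) lG lG'] by blast
  then show ?case
  proof cases
    case 2
    then obtain H where adj: "lm_adj V k G H" and "size (H - G') < size (G - G')"
      unfolding swap_towards_def by blast
    with less.hyps lG' have "(lm_adj V k)\<^sup>*\<^sup>* H G'"
      using lm_adj_def by blast
    with adj show ?thesis
      by (rule converse_rtranclp_into_rtranclp)
  next
    case 3
    then obtain H where adj: "lm_adj V k G' H" and closer: "size (H - G) < size (G' - G)"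
      unfolding swap_towards_def by blast
    then have lH: "loopy_multigraph V k H"
      unfolding lm_adj_def by blast
    have "size (G - H) < size (G - G')"
      using closer size_diff_commute loopy_multigraph_size_eq[OF assms(1)] lG lG' lH by metis
    with less.hyps lG lH have "(lm_adj V k)\<^sup>*\<^sup>* G H"
      by blast
    then show ?thesis
      using lm_adj_sym[OF adj] by (rule rtranclp.rtrancl_into_rtrancl)
  qed simp
qed

end
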